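(* For every fixed $\varepsilon>0$ there is a constant $K_\varepsilon<\infty$ such that for all $n\ge3$, $$P\big(|X_n-\mu_n|\ge\varepsilon\mu_n\big)\le n^{-2\varepsilon\ln\ln n+K_\varepsilon}.$$ That is, $P(|X_n-\mu_n|\ge\varepsilon\mu_n)\le n^{-2\varepsilon\ln\ln n+O(1)}$.
   Context: Let $X_n$ be the number of comparisons used by randomized Quicksort (uniform random pivot) on $n$ distinct numbers. Equivalently, $X_0=0$ and $$X_n\stackrel{d}{=}X_{U_n-1}+X^*_{n-U_n}+n-1,$$ with $U_n$ uniform on $\{1,\dots,n\}$, $X_j^*\stackrel{d}{=}X_j$, all independent. $\mu_n:=\mathbf EX_n=2(n+1)H_n-4n$, where $H_n=\sum_{k=1}^n1/k$. *)

theory Defs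
  imports "HOL-Probability.Probability"
begin

text \<open>Distribution of the number of comparisons of randomized Quicksort on n distinct keys:
  X_0 = 0, X_n = X_{U-1} + X'_{n-U} + n - 1 with U uniform on {1..n}, all independent.\<close>
function qs_comparisons :: "nat \<Rightarrow> nat pmf" where
  "qs_comparisons 0 = return_pmf 0"
| "qs_comparisons (Suc n) =
     bind_pmf (pmf_of_set {1..Suc n}) (\<lambda>u.
       bind_pmf (qs_comparisons (u - 1)) (\<lambda>a.
         bind_pmf (qs_comparisons (Suc n - u)) (\<lambda>b.
           return_pmf (a + b + n))))"
  by pat_completeness auto
termination
  by (relation "Wellfounded.measure id") auto

definition qs_mean :: "nat \<Rightarrow> real" where
  "qs_mean n = 2 * (real n + 1) * harm n - 4 * real n"

end

theory Submission
  imports Defs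
begin

text \<open>
  Let M_n(l) = E exp(l (X_n - mu_n)). Conditioning on the pivot u gives
  M_n(l) = (1/n) sum_u exp(l C_n(u)) M_{u-1}(l) M_{n-u}(l), where the centred toll
  C_n(u) = n - 1 + mu_{u-1} + mu_{n-u} - mu_n averages to 0 over u and is bounded by n + 1.
  Induction on n yields M_n(l) <= exp(phi(l (n + 1))) with phi(x) = 200 (exp|x| - 1 - |x|):
  splitting phi(l (n + 1)) into phi(l u) + phi(l (n + 1 - u)) leaves the cross term
  200 (exp a - 1)(exp b - 1), which pays for the toll (via a second order Taylor estimate
  when |l| (n + 1) is small, crudely when it is large). Chernoff's bound with
  l = ln ln n / (n + 1) then combines M_n(l), M_n(-l) <= n^200 with mu_n >= (n + 1)(2 ln n - 4).
\<close>

section \<open>The pivot recurrence and the centred toll\<close>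

lemma finite_set_pmf_qs_comparisons: "finite (set_pmf (qs_comparisons n))"
proof (induction n rule: less_induct)
  case (less n)
  show ?case
  proof (cases n)
    case (Suc m)
    then have "u - 1 < n \<and> Suc m - u < n" if "u \<in> {1..Suc m}" for u
      using that by auto
    with Suc less show ?thesis
      by (auto simp del: qs_comparisons.simps simp add: qs_comparisons.simps(2))
  qed simp
qed

lemma expectation_bind_pmf_finite:
  fixes h :: "'b \<Rightarrow> real"
  assumes "finite (set_pmf p)" "\<And>x. x \<in> set_pmf p \<Longrightarrow> finite (set_pmf (f x))"
  shows "measure_pmf.expectation (p \<bind> f) h =
         measure_pmf.expectation p (\<lambda>x. measure_pmf.expectation (f x) h)"
  by (subst pmf_expectation_bind[of "set_pmf p"])
     (auto simp: integral_measure_pmf[of "set_pmf p"] assms)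

definition qs_mgf :: "nat \<Rightarrow> real \<Rightarrow> real" where
  "qs_mgf n l = measure_pmf.expectation (qs_comparisons n) (\<lambda>x. exp (l * (real x - qs_mean n)))"

definition qs_toll :: "nat \<Rightarrow> nat \<Rightarrow> real" where
  "qs_toll n u = real n - 1 + qs_mean (u - 1) + qs_mean (n - u) - qs_mean n"

lemma qs_mgf_nonneg: "0 \<le> qs_mgf n l"
  unfolding qs_mgf_def by (rule integral_nonneg_AE) simp

lemma qs_mgf_0 [simp]: "qs_mgf 0 l = 1"
  by (simp add: qs_mgf_def qs_mean_def harm_def)

lemma qs_mgf_rec:
  assumes "n \<ge> 1"
  shows "qs_mgf n l =
    (\<Sum>u=1..n. exp (l * qs_toll n u) * qs_mgf (u - 1) l * qs_mgf (n - u) l) / real n"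
proof -
  obtain m where n: "n = Suc m" using assms by (cases n) auto
  let ?h = "\<lambda>x. exp (l * (real x - qs_mean n))"
  have pivot: "measure_pmf.expectation (qs_comparisons (u - 1) \<bind>
         (\<lambda>a. qs_comparisons (n - u) \<bind> (\<lambda>b. return_pmf (a + b + m)))) ?h
      = exp (l * qs_toll n u) * qs_mgf (u - 1) l * qs_mgf (n - u) l" for u
  proof -
    have "?h (a + b + m) = exp (l * qs_toll n u) * exp (l * (real a - qs_mean (u - 1)))
            * exp (l * (real b - qs_mean (n - u)))" for a b
      unfolding mult_exp_exp qs_toll_def n by (simp add: algebra_simps)
    then show ?thesis
      by (simp add: expectation_bind_pmf_finite finite_set_pmf_qs_comparisons qs_mgf_def)
  qed
  have "qs_mgf n l = (\<Sum>u=1..n. measure_pmf.expectation (qs_comparisons (u - 1) \<bind>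
         (\<lambda>a. qs_comparisons (n - u) \<bind> (\<lambda>b. return_pmf (a + b + m)))) ?h /\<^sub>R real n)"
    unfolding qs_mgf_def using qs_comparisons.simps(2)[of m]
    by (simp only: n) (subst pmf_expectation_bind_pmf_of_set, auto simp: finite_set_pmf_qs_comparisons)
  then show ?thesis unfolding pivot by (simp add: sum_distrib_left divide_inverse_commute)
qed

lemma harm_add_diff_le: "harm (j + m) - harm j \<le> (real m / (real j + 1) :: real)"
proof (induction m)
  case (Suc m)
  have "inverse (real (Suc (j + m))) \<le> 1 / (real j + 1)"
    by (simp add: inverse_eq_divide frac_le)
  with Suc show ?case by (simp add: harm_Suc add_divide_distrib)
qed simp

lemma harm_add_diff_ge:
  assumes "m \<ge> 1"
  shows "1 / real (j + m) \<le> (harm (j + m) - harm j :: real)"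
proof -
  obtain m' where "m = Suc m'" using assms by (cases m) auto
  then have "harm (j + m) = harm (j + m') + (inverse (real (j + m)) :: real)"
    by (simp add: harm_Suc)
  moreover have "harm j \<le> (harm (j + m') :: real)" by (rule harm_mono) simp
  ultimately show ?thesis by (simp add: inverse_eq_divide)
qed

lemma qs_mean_Suc: "real (Suc n) * qs_mean (Suc n) = (real n + 2) * qs_mean n + 2 * real n"
  unfolding qs_mean_def by (simp add: harm_Suc field_simps)

lemma qs_mean_sum: "real n * qs_mean n = real n * (real n - 1) + 2 * (\<Sum>k<n. qs_mean k)"
proof (induction n)
  case (Suc n)
  then show ?case using qs_mean_Suc[of n] by (simp add: algebra_simps)
qed simp

lemma sum_qs_toll: "(\<Sum>u=1..n. qs_toll n u) = 0"
proof -
  have "(\<Sum>u=1..n. qs_mean (u - 1)) = (\<Sum>k<n. qs_mean k)"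
    by (rule sum.reindex_bij_witness[where i="\<lambda>k. k + 1" and j="\<lambda>u. u - 1"]) auto
  moreover have "(\<Sum>u=1..n. qs_mean (n - u)) = (\<Sum>k<n. qs_mean k)"
    by (rule sum.reindex_bij_witness[where i="\<lambda>k. n - k" and j="\<lambda>u. n - u"]) auto
  ultimately show ?thesis
    using qs_mean_sum[of n] by (simp add: qs_toll_def sum.distrib sum_subtractf)
qed

lemma abs_qs_toll_le:
  assumes "u \<in> {1..n}"
  shows "\<bar>qs_toll n u\<bar> \<le> real n + 1"
proof -
  define j k where "j = u - 1" and "k = n - u"
  have n: "j + (k + 1) = n" "k + (j + 1) = n" using assms by (auto simp: j_def k_def)
  then have nr: "real n = real j + real k + 1" by linarith
  define X Y where "X = (real j + 1) * (harm n - harm j)" and "Y = (real k + 1) * (harm n - harm k)"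
  have toll: "qs_toll n u = real n + 3 - 2 * (X + Y)"
    unfolding qs_toll_def qs_mean_def X_def Y_def j_def[symmetric] k_def[symmetric]
    using nr by (simp add: algebra_simps)
  have dj: "1 / real n \<le> harm n - harm j" "harm n - harm j \<le> real (k + 1) / (real j + 1)"
    using harm_add_diff_ge[where j=j and m="k + 1"] harm_add_diff_le[where j=j and m="k + 1"]
    unfolding n by simp_all
  have dk: "1 / real n \<le> harm n - harm k" "harm n - harm k \<le> real (j + 1) / (real k + 1)"
    using harm_add_diff_ge[where j=k and m="j + 1"] harm_add_diff_le[where j=k and m="j + 1"]
    unfolding n by simp_all
  have "X \<le> real k + 1" "Y \<le> real j + 1"
    using dj(2) dk(2) by (simp_all add: X_def Y_def field_simps)
  moreover have "(real j + 1) / real n \<le> X" "(real k + 1) / real n \<le> Y"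
    using mult_left_mono[OF dj(1), of "real j + 1"] mult_left_mono[OF dk(1), of "real k + 1"]
    by (simp_all add: X_def Y_def)
  moreover have "1 \<le> (real j + 1) / real n + (real k + 1) / real n"
    unfolding add_divide_distrib[symmetric] using nr by (simp add: le_divide_eq)
  ultimately show ?thesis using nr by (simp add: toll abs_le_iff)
qed

lemma exp_le_quadratic:
  fixes y :: real
  assumes "\<bar>y\<bar> \<le> 1"
  shows "exp y \<le> 1 + y + y\<^sup>2"
proof (cases "y \<ge> 0")
  case True
  then show ?thesis using exp_bound[of y] assms by simp
next
  case False
  have "0 < y\<^sup>2" "-1 \<le> y" using False assms by (simp_all add: abs_le_iff)
  then have pos: "0 < 1 + y + y\<^sup>2" by linarith
  have "y ^ 3 < 0" using False by (simp add: power_less_zero_eq)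
  then have "1 \<le> 1 - y ^ 3" by simp
  also have "\<dots> = (1 - y) * (1 + y + y\<^sup>2)" by (simp add: algebra_simps power2_eq_square power3_eq_cube)
  also have "\<dots> \<le> exp (- y) * (1 + y + y\<^sup>2)"
    using exp_ge_add_one_self[of "- y"] pos by (intro mult_right_mono) auto
  finally show ?thesis by (simp add: exp_minus field_simps)
qed

lemma sum_exp_neg_mult_le:
  fixes \<beta> :: real
  assumes "\<beta> > 0"
  shows "(\<Sum>u=1..n. exp (- \<beta> * real u)) \<le> 1 / \<beta>"
proof -
  define r where "r = exp (- \<beta>)"
  have r: "0 < r" "r < 1" using assms by (auto simp: r_def)
  have "(\<Sum>u=1..n. exp (- \<beta> * real u)) = (\<Sum>u=1..n. r ^ u)"
    by (simp add: r_def exp_of_nat_mult[symmetric] mult.commute)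
  also have "\<dots> \<le> r / (1 - r)"
    using r by (auto simp: sum_gp intro: divide_right_mono)
  also have "\<dots> \<le> 1 / \<beta>"
  proof -
    have "r * (1 + \<beta>) \<le> r * exp \<beta>"
      using r exp_ge_add_one_self[of \<beta>] by (intro mult_left_mono) auto
    then have "r * (1 + \<beta>) \<le> 1" by (simp add: r_def exp_minus)
    then show ?thesis using r assms by (simp add: field_simps)
  qed
  finally show ?thesis .
qed

lemma sum_mult_diff_eq:
  "6 * (\<Sum>u=1..n. real u * (m - real u)) = real n * (real n + 1) * (3 * m - 2 * real n - 1)"
  by (induction n) (simp_all add: algebra_simps)

lemma exp_sub_cross_term_le_small:
  fixes s c a b :: real
  assumes s: "0 \<le> s" "s \<le> 1/2" and c: "\<bar>c\<bar> \<le> 1" and ab: "0 \<le> a" "0 \<le> b" "a + b = s"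
  shows "exp (s * c - 200 * ((exp a - 1) * (exp b - 1))) \<le> 1 + s * c + s\<^sup>2 - 7 * (a * b)"
proof -
  define R where "R = 1 + s * c + s\<^sup>2"
  define P where "P = 200 * ((exp a - 1) * (exp b - 1))"
  have "4 * (a * b) \<le> s\<^sup>2"
    using ab(3) zero_le_power2[of "a - b"] by (auto simp: power2_eq_square algebra_simps)
  moreover have "s\<^sup>2 \<le> (1/2)\<^sup>2" using s by (intro power_mono) auto
  ultimately have ab16: "a * b \<le> 1/16" by (simp add: power2_eq_square)
  have "a \<le> exp a - 1" "b \<le> exp b - 1"
    using exp_ge_add_one_self[of a] exp_ge_add_one_self[of b] by linarith+
  then have "a * b \<le> (exp a - 1) * (exp b - 1)"
    using ab by (intro mult_mono) auto
  then have P: "200 * (a * b) \<le> P" by (simp add: P_def)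
  have sc: "\<bar>s * c\<bar> \<le> s" using s c by (simp add: abs_mult mult_left_le)
  have "exp (s * c) \<le> 1 + s * c + (s * c)\<^sup>2"
    using exp_le_quadratic[of "s * c"] sc s by simp
  also have "(s * c)\<^sup>2 \<le> s\<^sup>2"
    using sc s by (metis abs_ge_zero power2_abs power_mono)
  finally have eR: "exp (s * c) \<le> R" by (simp add: R_def)
  have R: "1/2 \<le> R" using sc s zero_le_power2[of s] unfolding R_def abs_le_iff by linarith
  have P0: "0 \<le> P" using P ab mult_nonneg_nonneg[of a b] by linarith
  have eP: "exp (- P) \<le> 1 / (1 + P)"
    using exp_ge_add_one_self[of P] P0 by (simp add: exp_minus field_simps)
  \<comment> \<open>\<open>a b \<le> 1/16\<close> and \<open>P \<ge> 200 a b\<close> give \<open>P / (1 + P) \<ge> 14 a b\<close>,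
    which with \<open>R \<ge> 1/2\<close> saves \<open>7 a b\<close>\<close>
  have "P * (1/8) \<le> P * (1 - 14 * (a * b))"
    using P0 ab16 by (intro mult_left_mono) auto
  then have "14 * (a * b) * (1 + P) \<le> P"
    using P mult_nonneg_nonneg[OF ab(1,2)] by (simp add: algebra_simps)
  then have q: "14 * (a * b) \<le> P / (1 + P)"
    using P0 by (simp add: field_simps)
  have "exp (s * c - P) = exp (s * c) * exp (- P)" by (simp add: exp_diff exp_minus field_simps)
  also have "\<dots> \<le> R * (1 / (1 + P))"
    using eR eP R by (intro mult_mono) auto
  also have "\<dots> = R - R * (P / (1 + P))" using P0 by (simp add: field_simps)
  also have "\<dots> \<le> R - (1/2) * (14 * (a * b))"
    using R q ab by (intro diff_left_mono mult_mono) auto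
  finally show ?thesis by (simp add: R_def P_def)
qed

lemma cross_term_ge:
  fixes a b :: real
  assumes a: "0 \<le> a" and b: "1/4 \<le> b"
  shows "exp (a + b) / 10 * min a 1 \<le> (exp a - 1) * (exp b - 1)"
proof -
  have "exp (1/4::real) \<ge> 5/4" using exp_ge_add_one_self[of "1/4::real"] by simp
  then have "5/4 \<le> exp b" using b by (meson exp_le_cancel_iff order_trans)
  then have hb: "1/5 \<le> 1 - exp (- b)" by (simp add: exp_minus field_simps)
  have "exp (- a) \<le> 1 / (1 + a)"
    using exp_ge_add_one_self[of a] a by (simp add: exp_minus field_simps)
  moreover have "min a 1 / 2 \<le> 1 - 1 / (1 + a)"
    using a by (auto simp: field_simps min_def mult_left_le)
  ultimately have ha: "min a 1 / 2 \<le> 1 - exp (- a)" by linarith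
  have "(min a 1 / 2) * (1/5) \<le> (1 - exp (- a)) * (1 - exp (- b))"
    using ha hb a by (intro mult_mono) auto
  then have "exp (a + b) * ((min a 1 / 2) * (1/5)) \<le> exp (a + b) * ((1 - exp (- a)) * (1 - exp (- b)))"
    by (intro mult_left_mono) auto
  also have "\<dots> = (exp a - 1) * (exp b - 1)"
    by (simp add: exp_add exp_minus field_simps)
  finally show ?thesis by simp
qed

lemma exp_sub_cross_term_le_large:
  fixes s c a b :: real
  assumes s: "1/2 \<le> s" and c: "c \<le> 1" and ab: "0 \<le> a" "0 \<le> b" "a + b = s"
  shows "exp (s * c - 200 * ((exp a - 1) * (exp b - 1)))
     \<le> exp s * (exp (- 20 * exp s * a) + exp (- 20 * exp s * b) + exp (- 20 * exp s))"
proof -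
  obtain m where m: "m \<in> {a, b}" "exp s / 10 * min m 1 \<le> (exp a - 1) * (exp b - 1)"
  proof (cases "1/4 \<le> b")
    case True
    then show ?thesis using that cross_term_ge[OF ab(1) True] ab(3) by blast
  next
    case False
    then have a4: "1/4 \<le> a" using s ab by linarith
    have "exp s / 10 * min b 1 \<le> (exp a - 1) * (exp b - 1)"
      using cross_term_ge[OF ab(2) a4] ab(3) by (simp add: ac_simps)
    then show ?thesis using that by blast
  qed
  have "s * c \<le> s" using s c by (simp add: mult_left_le)
  then have "exp (s * c - 200 * ((exp a - 1) * (exp b - 1))) \<le> exp (s - 20 * exp s * min m 1)"
    using m(2) by simp
  also have "\<dots> = exp s * exp (- 20 * exp s * min m 1)" by (simp add: exp_diff exp_minus field_simps)
  also have "exp (- 20 * exp s * min m 1) \<le> exp (- 20 * exp s * a) + exp (- 20 * exp s * b) + exp (- 20 * exp s)"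
    using m(1) by (auto simp: min_def add_nonneg_pos add_pos_nonneg)
  finally show ?thesis by (simp add: mult_left_mono)
qed

lemma sum_exp_sub_cross_term_le_small:
  fixes t :: real and c :: "nat \<Rightarrow> real"
  assumes c: "\<And>u. u \<in> {1..n} \<Longrightarrow> \<bar>c u\<bar> \<le> 1" "(\<Sum>u=1..n. c u) = 0"
    and t: "0 \<le> t" "t * (real n + 1) \<le> 1/2"
  shows "(\<Sum>u=1..n. exp (t * (real n + 1) * c u
           - 200 * ((exp (t * real u) - 1) * (exp (t * (real n + 1 - real u)) - 1)))) \<le> real n"
    (is "(\<Sum>u=1..n. ?T u) \<le> _")
proof -
  let ?s = "t * (real n + 1)"
  let ?D = "\<lambda>u. real u * (real n + 1 - real u)"
  have "(\<Sum>u=1..n. ?T u) \<le> (\<Sum>u=1..n. 1 + ?s * c u + ?s\<^sup>2 - 7 * t\<^sup>2 * ?D u)"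
  proof (rule sum_mono)
    fix u assume u: "u \<in> {1..n}"
    have "?T u \<le> 1 + ?s * c u + ?s\<^sup>2 - 7 * (t * real u * (t * (real n + 1 - real u)))"
    proof (rule exp_sub_cross_term_le_small)
      have "t * real u \<le> t * (real n + 1)" using u t by (intro mult_left_mono) auto
      then show "0 \<le> t * (real n + 1 - real u)" by (simp add: algebra_simps)
    qed (use c(1)[OF u] t in \<open>auto simp: algebra_simps\<close>)
    then show "?T u \<le> 1 + ?s * c u + ?s\<^sup>2 - 7 * t\<^sup>2 * ?D u"
      by (simp add: power2_eq_square algebra_simps)
  qed
  also have "\<dots> = real n + ?s * (\<Sum>u=1..n. c u) + real n * ?s\<^sup>2 - 7 * t\<^sup>2 * (\<Sum>u=1..n. ?D u)"
    by (simp add: sum.distrib sum_subtractf sum_distrib_left)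
  also have "(\<Sum>u=1..n. ?D u) = real n * (real n + 1) * (real n + 2) / 6"
    using sum_mult_diff_eq[where n=n and m="real n + 1"] by (simp add: algebra_simps)
  also have "real n + ?s * (\<Sum>u=1..n. c u) + real n * ?s\<^sup>2
      - 7 * t\<^sup>2 * (real n * (real n + 1) * (real n + 2) / 6)
      = real n - t\<^sup>2 * real n * (real n + 1) * (real n + 8) / 6"
    unfolding c(2) by (simp add: power2_eq_square algebra_simps)
  also have "\<dots> \<le> real n" by simp
  finally show ?thesis .
qed

lemma sum_exp_sub_cross_term_le_large:
  fixes t :: real and c :: "nat \<Rightarrow> real"
  assumes n: "n \<ge> 1" and c: "\<And>u. u \<in> {1..n} \<Longrightarrow> c u \<le> 1"
    and t: "1/2 \<le> t * (real n + 1)"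
  shows "(\<Sum>u=1..n. exp (t * (real n + 1) * c u
           - 200 * ((exp (t * real u) - 1) * (exp (t * (real n + 1 - real u)) - 1)))) \<le> real n"
    (is "(\<Sum>u=1..n. ?T u) \<le> _")
proof -
  define s where "s = t * (real n + 1)"
  define \<beta> where "\<beta> = 20 * exp s * t"
  have "0 < t * (real n + 1)" using t by linarith
  then have t0: "0 < t" by (simp add: zero_less_mult_iff)
  then have \<beta>: "0 < \<beta>" by (simp add: \<beta>_def)
  have "(\<Sum>u=1..n. ?T u) \<le>
      (\<Sum>u=1..n. exp s * (exp (- \<beta> * real u) + exp (- \<beta> * real (Suc n - u)) + exp (- 20 * exp s)))"
  proof (rule sum_mono)
    fix u assume u: "u \<in> {1..n}"
    have b: "0 \<le> t * (real n + 1 - real u)" using u t0 by simp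
    have "?T u = exp (s * c u - 200 * ((exp (t * real u) - 1) * (exp (t * (real n + 1 - real u)) - 1)))"
      by (simp add: s_def)
    also have "\<dots> \<le> exp s * (exp (- 20 * exp s * (t * real u))
        + exp (- 20 * exp s * (t * (real n + 1 - real u))) + exp (- 20 * exp s))"
      by (rule exp_sub_cross_term_le_large) (use c[OF u] t t0 b in \<open>auto simp: s_def algebra_simps\<close>)
    also have "\<dots> = exp s * (exp (- \<beta> * real u) + exp (- \<beta> * real (Suc n - u)) + exp (- 20 * exp s))"
      using u by (simp add: \<beta>_def of_nat_diff mult.assoc mult.left_commute)
    finally show "?T u \<le> \<dots>" .
  qed
  also have "\<dots> = exp s * ((\<Sum>u=1..n. exp (- \<beta> * real u))
      + (\<Sum>u=1..n. exp (- \<beta> * real (Suc n - u))) + real n * exp (- 20 * exp s))"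
    by (simp only: sum_distrib_left[symmetric] sum.distrib sum_constant card_atLeastAtMost) simp
  also have "(\<Sum>u=1..n. exp (- \<beta> * real (Suc n - u))) = (\<Sum>u=1..n. exp (- \<beta> * real u))"
    by (rule sum.reindex_bij_witness[where i="\<lambda>u. Suc n - u" and j="\<lambda>u. Suc n - u"]) auto
  also have "exp s * ((\<Sum>u=1..n. exp (- \<beta> * real u)) + (\<Sum>u=1..n. exp (- \<beta> * real u))
      + real n * exp (- 20 * exp s)) \<le> exp s * (1 / \<beta> + 1 / \<beta> + real n * exp (- 20 * exp s))"
    using sum_exp_neg_mult_le[OF \<beta>, of n] by (intro mult_left_mono add_mono) auto
  also have "\<dots> = 1 / (10 * t) + real n * exp (s - 20 * exp s)"
    using t0 by (simp add: \<beta>_def exp_diff exp_minus field_simps)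
  also have "\<dots> \<le> (real n + 1) / 5 + real n * (1/2)"
  proof (intro add_mono mult_left_mono)
    show "1 / (10 * t) \<le> (real n + 1) / 5" using t t0 by (simp add: field_simps)
    have "s - 20 * exp s \<le> -1" using exp_ge_add_one_self[of s] t unfolding s_def by linarith
    then have "exp (s - 20 * exp s) \<le> exp (-1)" by simp
    also have "exp (-1::real) \<le> 1/2"
      using exp_ge_add_one_self[of "1::real"] by (simp add: exp_minus field_simps)
    finally show "exp (s - 20 * exp s) \<le> 1/2" .
  qed simp
  also have "\<dots> \<le> real n" using n by (simp add: field_simps)
  finally show ?thesis .
qed

lemma sum_exp_sub_cross_term_le:
  fixes t :: real and c :: "nat \<Rightarrow> real"
  assumes "n \<ge> 1" "\<And>u. u \<in> {1..n} \<Longrightarrow> \<bar>c u\<bar> \<le> 1" "(\<Sum>u=1..n. c u) = 0" "0 \<le> t"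
  shows "(\<Sum>u=1..n. exp (t * (real n + 1) * c u
           - 200 * ((exp (t * real u) - 1) * (exp (t * (real n + 1 - real u)) - 1)))) \<le> real n"
proof (cases "t * (real n + 1) \<le> 1/2")
  case True
  with assms show ?thesis by (intro sum_exp_sub_cross_term_le_small) auto
next
  case False
  with assms show ?thesis by (intro sum_exp_sub_cross_term_le_large) (auto simp: abs_le_iff)
qed

section \<open>Bounding the moment generating function\<close>

definition mgf_exponent :: "real \<Rightarrow> real" where
  "mgf_exponent x = 200 * (exp \<bar>x\<bar> - 1 - \<bar>x\<bar>)"

lemma mgf_exponent_nonneg: "0 \<le> mgf_exponent x"
proof -
  have "0 \<le> exp \<bar>x\<bar> - 1 - \<bar>x\<bar>" using exp_ge_add_one_self[of "\<bar>x\<bar>"] by linarith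
  then show ?thesis by (simp add: mgf_exponent_def)
qed

lemma mgf_exponent_mult_split:
  assumes "0 \<le> y" "y \<le> x"
  shows "mgf_exponent (l * x) = mgf_exponent (l * y) + mgf_exponent (l * (x - y))
    + 200 * ((exp (\<bar>l\<bar> * y) - 1) * (exp (\<bar>l\<bar> * (x - y)) - 1))"
proof -
  have "\<bar>l * x\<bar> = \<bar>l\<bar> * x" "\<bar>l * y\<bar> = \<bar>l\<bar> * y" "\<bar>l * (x - y)\<bar> = \<bar>l\<bar> * (x - y)"
    using assms by (simp_all add: abs_mult)
  moreover have "exp (\<bar>l\<bar> * x) = exp (\<bar>l\<bar> * y) * exp (\<bar>l\<bar> * (x - y))"
    by (simp add: mult_exp_exp algebra_simps)
  ultimately show ?thesis
    unfolding mgf_exponent_def by (simp only:) (simp add: algebra_simps)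
qed

theorem qs_mgf_le: "qs_mgf n l \<le> exp (mgf_exponent (l * (real n + 1)))"
proof (induction n rule: less_induct)
  case (less n)
  show ?case
  proof (cases "n = 0")
    case True
    then show ?thesis using mgf_exponent_nonneg by simp
  next
    case False
    then have n: "n \<ge> 1" by simp
    define c where "c u = sgn l * qs_toll n u / (real n + 1)" for u
    define T where "T u = exp (\<bar>l\<bar> * (real n + 1) * c u
           - 200 * ((exp (\<bar>l\<bar> * real u) - 1) * (exp (\<bar>l\<bar> * (real n + 1 - real u)) - 1)))" for u
    let ?B = "exp (mgf_exponent (l * (real n + 1)))"
    have IH: "qs_mgf (u - 1) l \<le> exp (mgf_exponent (l * real u))"
      "qs_mgf (n - u) l \<le> exp (mgf_exponent (l * (real n + 1 - real u)))" if "u \<in> {1..n}" for u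
      using less[of "u - 1"] less[of "n - u"] that by (auto simp: of_nat_diff algebra_simps)
    have split: "exp (l * qs_toll n u) * exp (mgf_exponent (l * real u))
        * exp (mgf_exponent (l * (real n + 1 - real u))) = ?B * T u" if u: "u \<in> {1..n}" for u
    proof -
      have "\<bar>l\<bar> * (real n + 1) * c u = l * qs_toll n u"
        by (simp add: c_def sgn_if)
      moreover have "real u \<le> real n + 1" using u by simp
      ultimately show ?thesis
        using mgf_exponent_mult_split[of "real u" "real n + 1" l]
        by (simp add: T_def mult_exp_exp algebra_simps)
    qed
    have "qs_mgf n l = (\<Sum>u=1..n. exp (l * qs_toll n u) * qs_mgf (u - 1) l * qs_mgf (n - u) l) / real n"
      using n by (rule qs_mgf_rec)
    also have "\<dots> \<le> (\<Sum>u=1..n. exp (l * qs_toll n u) * exp (mgf_exponent (l * real u))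
                       * exp (mgf_exponent (l * (real n + 1 - real u)))) / real n"
      using IH by (intro divide_right_mono sum_mono mult_mono) (auto simp: qs_mgf_nonneg)
    also have "\<dots> = ?B * (\<Sum>u=1..n. T u) / real n"
      by (simp add: split sum_distrib_left)
    also have "\<dots> \<le> ?B * real n / real n"
    proof (intro divide_right_mono mult_left_mono)
      show "(\<Sum>u=1..n. T u) \<le> real n"
        unfolding T_def
      proof (rule sum_exp_sub_cross_term_le[OF n])
        show "\<bar>c u\<bar> \<le> 1" if "u \<in> {1..n}" for u
          using abs_qs_toll_le[OF that] by (simp add: c_def abs_mult abs_sgn_eq divide_le_eq_1)
        show "(\<Sum>u=1..n. c u) = 0"
          using sum_qs_toll[of n] by (simp add: c_def sum_divide_distrib[symmetric] sum_distrib_left[symmetric])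
      qed simp
    qed auto
    also have "\<dots> = ?B" using n by simp
    finally show ?thesis .
  qed
qed

section \<open>Tail bound\<close>

lemma prob_abs_ge_le_Chernoff:
  fixes p :: "'a pmf" and f :: "'a \<Rightarrow> real"
  assumes "finite (set_pmf p)" and s: "0 \<le> s"
  shows "measure_pmf.prob p {x. a \<le> \<bar>f x\<bar>} \<le>
    (measure_pmf.expectation p (\<lambda>x. exp (s * f x))
      + measure_pmf.expectation p (\<lambda>x. exp (- s * f x))) / exp (s * a)"
proof -
  have Markov: "measure_pmf.prob p {x. exp (s * a) \<le> g x} \<le> measure_pmf.expectation p g / exp (s * a)"
    if "\<And>x. 0 \<le> g x" for g
    using integral_Markov_inequality_measure[OF integrable_measure_pmf_finite[OF assms(1)],
        of UNIV g "exp (s * a)"] that by simp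
  have "{x. a \<le> \<bar>f x\<bar>} \<subseteq> {x. exp (s * a) \<le> exp (s * f x)} \<union> {x. exp (s * a) \<le> exp (- s * f x)}"
  proof
    fix x assume "x \<in> {x. a \<le> \<bar>f x\<bar>}"
    then have "a \<le> f x \<or> a \<le> - f x" by (auto simp: abs_if split: if_splits)
    then have "s * a \<le> s * f x \<or> s * a \<le> s * (- f x)"
      using mult_left_mono[OF _ s] by blast
    then show "x \<in> {x. exp (s * a) \<le> exp (s * f x)} \<union> {x. exp (s * a) \<le> exp (- s * f x)}"
      by auto
  qed
  then have "measure_pmf.prob p {x. a \<le> \<bar>f x\<bar>} \<le> measure_pmf.prob p
      ({x. exp (s * a) \<le> exp (s * f x)} \<union> {x. exp (s * a) \<le> exp (- s * f x)})"
    by (rule measure_pmf.finite_measure_mono) simp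
  also have "\<dots> \<le> measure_pmf.prob p {x. exp (s * a) \<le> exp (s * f x)}
      + measure_pmf.prob p {x. exp (s * a) \<le> exp (- s * f x)}"
    by (rule measure_Un_le) auto
  also have "\<dots> \<le> measure_pmf.expectation p (\<lambda>x. exp (s * f x)) / exp (s * a)
      + measure_pmf.expectation p (\<lambda>x. exp (- s * f x)) / exp (s * a)"
    by (intro add_mono Markov) auto
  finally show ?thesis by (simp add: add_divide_distrib)
qed

lemma qs_mean_ge: "(real n + 1) * (2 * ln (real n + 1) - 4) \<le> qs_mean n"
proof -
  have "(real n + 1) * ln (real n + 1) \<le> (real n + 1) * harm n"
    using ln_le_harm[of n] by (intro mult_left_mono) auto
  then show ?thesis by (simp add: qs_mean_def algebra_simps)
qed

lemma qs_tail_bound: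
  fixes \<epsilon> :: real
  assumes \<epsilon>: "0 < \<epsilon>" and n: "3 \<le> n"
  shows "measure_pmf.prob (qs_comparisons n) {x. \<bar>real x - qs_mean n\<bar> \<ge> \<epsilon> * qs_mean n}
           \<le> real n powr (- 2 * \<epsilon> * ln (ln (real n)) + (201 + 4 * \<epsilon>))"
proof -
  define L where "L = ln (ln (real n))"
  define l where "l = L / (real n + 1)"
  have "exp 1 \<le> real n" using exp_le n by linarith
  then have lnn: "1 \<le> ln (real n)" using ln_le_cancel_iff[of "exp 1" "real n"] n by simp
  then have L: "0 \<le> L" "L \<le> ln (real n)" "exp L = ln (real n)"
    using ln_le_minus_one[of "ln (real n)"] by (simp_all add: L_def)
  have l: "0 \<le> l" by (simp add: l_def L)
  have "mgf_exponent L \<le> 200 * ln (real n)"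
    using L by (simp add: mgf_exponent_def)
  then have mgf: "qs_mgf n l \<le> exp (200 * ln (real n))" "qs_mgf n (- l) \<le> exp (200 * ln (real n))"
    using qs_mgf_le[of n l] qs_mgf_le[of n "- l"] by (auto simp: l_def mgf_exponent_def
        intro: order_trans)
  have "2 * ln (real n + 1) - 4 \<le> qs_mean n / (real n + 1)"
    using qs_mean_ge[of n] by (simp add: field_simps)
  moreover have "ln (real n) \<le> ln (real n + 1)" using n by simp
  ultimately have "L * (2 * ln (real n) - 4) \<le> L * (qs_mean n / (real n + 1))"
    using L by (intro mult_left_mono) auto
  then have "\<epsilon> * (L * (2 * ln (real n) - 4)) \<le> \<epsilon> * (L * (qs_mean n / (real n + 1)))"
    by (rule mult_left_mono) (use \<epsilon> in simp)
  then have exponent: "\<epsilon> * L * (2 * ln (real n) - 4) \<le> l * (\<epsilon> * qs_mean n)"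
    by (simp add: l_def ac_simps)
  have "measure_pmf.prob (qs_comparisons n) {x. \<bar>real x - qs_mean n\<bar> \<ge> \<epsilon> * qs_mean n}
      \<le> (qs_mgf n l + qs_mgf n (- l)) / exp (l * (\<epsilon> * qs_mean n))"
    using prob_abs_ge_le_Chernoff[OF finite_set_pmf_qs_comparisons l,
        where f="\<lambda>x. real x - qs_mean n" and a="\<epsilon> * qs_mean n"]
    by (simp add: qs_mgf_def)
  also have "\<dots> \<le> 2 * exp (200 * ln (real n)) / exp (\<epsilon> * L * (2 * ln (real n) - 4))"
    using mgf exponent by (intro frac_le) auto
  also have "\<dots> = exp (ln 2 + 200 * ln (real n) - \<epsilon> * L * (2 * ln (real n) - 4))"
    by (simp add: exp_diff exp_add)
  also have "\<dots> \<le> exp ((- 2 * \<epsilon> * L + (201 + 4 * \<epsilon>)) * ln (real n))"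
  proof -
    have "ln 2 \<le> ln (real n)" "4 * \<epsilon> * L \<le> 4 * \<epsilon> * ln (real n)"
      using n L \<epsilon> by simp_all
    then show ?thesis by (simp add: algebra_simps)
  qed
  also have "\<dots> = real n powr (- 2 * \<epsilon> * ln (ln (real n)) + (201 + 4 * \<epsilon>))"
    using n by (simp add: powr_def L_def)
  finally show ?thesis .
qed

theorem corollary7p4:
  fixes \<epsilon> :: real
  assumes "\<epsilon> > 0"
  shows "\<exists>K::real. \<forall>n::nat. n \<ge> 3 \<longrightarrow>
           measure_pmf.prob (qs_comparisons n)
             {x. \<bar>real x - qs_mean n\<bar> \<ge> \<epsilon> * qs_mean n}
           \<le> real n powr (- 2 * \<epsilon> * ln (ln (real n)) + K)"
  using qs_tail_bound[OF assms] by blast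

end
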